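(* Let $r\geq 1$, let $\mathbf a=(a_1,\ldots,a_r)$ be positive integers, let $D$ be a positive common multiple of $a_1,\ldots,a_r$, and let $\sigma=a_1+\cdots+a_r$. Then for every integer $n\geq 0$, $$ (r-1)!\,p_{\mathbf a}(n) = \sum_{j= \lceil \frac{n+\sigma}{D} \rceil - r}^{\lfloor n/D\rfloor} (j+1)(j+2)\cdots (j+r-1)\, f_{\mathbf a}(n-jD). $$
   Context: $p_{\mathbf a}(n)$ is the number of integer solutions $(x_1,\ldots,x_r)$ of $a_1x_1+\cdots+a_rx_r=n$ with all $x_i\geq 0$. For every integer $m\geq 0$, $f_{\mathbf a}(m)$ denotes the number of integer tuples $(j_1,\ldots,j_r)$ with $a_1j_1+\cdots+a_rj_r=m$ and $0\leq j_k\leq \frac{D}{a_k}-1$ for $1\leq k\leq r$ (so $f_{\mathbf a}(m)=0$ for $m> rD-\sigma$). *)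

theory Defs
  imports Complex_Main
begin

text \<open>The vector a = (a_1,...,a_r) is a list of length r; tuples are lists of
the same length.\<close>

definition p_a :: "nat list \<Rightarrow> nat \<Rightarrow> nat" where
  "p_a a n = card {x :: nat list. length x = length a \<and>
                    (\<Sum>k<length a. a ! k * x ! k) = n}"

definition f_a :: "nat list \<Rightarrow> nat \<Rightarrow> nat \<Rightarrow> nat" where
  "f_a a D m = card {j :: nat list. length j = length a \<and>
                    (\<Sum>k<length a. a ! k * j ! k) = m \<and>
                    (\<forall>k<length a. int (j ! k) \<le> int (D div (a ! k)) - 1)}"

end

theory Submission imports Defs begin

text \<open>Put \<open>c\<^sub>k = D / a\<^sub>k\<close>. Division with remainder \<open>x\<^sub>k = j\<^sub>k + c\<^sub>k q\<^sub>k\<close>, \<open>j\<^sub>k < c\<^sub>k\<close>,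
  turns a solution of \<open>\<Sum> a\<^sub>k x\<^sub>k = n\<close> into a solution \<open>j\<close> of \<open>\<Sum> a\<^sub>k j\<^sub>k = n - Q D\<close> inside the box
  counted by \<open>f\<close>, together with a composition \<open>q\<close> of \<open>Q\<close> into \<open>r\<close> parts, of which there are
  \<open>(Q+1)\<cdots>(Q+r-1) / (r-1)!\<close>. In the stated sum the terms with \<open>j < 0\<close> vanish through the
  product, and those below the lower limit because \<open>f(m) = 0\<close> for \<open>m > r D - \<sigma>\<close>.\<close>

definition solutions :: "nat list \<Rightarrow> nat \<Rightarrow> nat list set" where
  "solutions a n = {x. length x = length a \<and> (\<Sum>k<length a. a ! k * x ! k) = n}"

definition boxed_solutions :: "nat list \<Rightarrow> (nat \<Rightarrow> nat) \<Rightarrow> nat \<Rightarrow> nat list set" where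
  "boxed_solutions a c m = {j \<in> solutions a m. \<forall>k<length a. j ! k < c k}"

definition compositions :: "nat \<Rightarrow> nat \<Rightarrow> nat list set" where
  "compositions r Q = {q. length q = r \<and> sum_list q = Q}"

lemma p_a_eq_card_solutions: "p_a a n = card (solutions a n)"
  by (simp add: p_a_def solutions_def)

lemma f_a_eq_card_boxed_solutions: "f_a a D m = card (boxed_solutions a (\<lambda>k. D div a ! k) m)"
proof -
  have "int (j ! k) \<le> int (D div a ! k) - 1 \<longleftrightarrow> j ! k < D div a ! k" for j :: "nat list" and k
    by linarith
  then show ?thesis
    by (simp add: f_a_def boxed_solutions_def solutions_def)
qed

lemma finite_boxed_solutions: "finite (boxed_solutions a c m)"
proof (rule finite_subset)
  let ?B = "\<Sum>k<length a. c k"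
  show "boxed_solutions a c m \<subseteq> {xs. set xs \<subseteq> {..<?B} \<and> length xs = length a}"
  proof
    fix j assume j: "j \<in> boxed_solutions a c m"
    have "j ! k < ?B" if "k < length a" for k
    proof -
      have "c k \<le> ?B"
        using that by (intro member_le_sum) auto
      with j that show ?thesis
        by (auto simp: boxed_solutions_def intro: less_le_trans)
    qed
    with j show "j \<in> {xs. set xs \<subseteq> {..<?B} \<and> length xs = length a}"
      by (auto simp: boxed_solutions_def solutions_def in_set_conv_nth)
  qed
qed (rule finite_lists_length_eq, simp)

lemma finite_compositions: "finite (compositions r Q)"
proof (rule finite_subset)
  show "compositions r Q \<subseteq> {xs. set xs \<subseteq> {..Q} \<and> length xs = r}"
    unfolding compositions_def using member_le_sum_list by fastforce
qed (rule finite_lists_length_eq, simp)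

lemma card_compositions: "card (compositions r Q) = (Q + r - 1) choose Q"
  unfolding compositions_def by (rule card_length_sum_list)

lemma sum_list_eq_sum_nth: "length q = r \<Longrightarrow> sum_list q = (\<Sum>k<r. q ! k)"
  by (simp add: sum_list_sum_nth atLeast0LessThan)

definition remainders :: "(nat \<Rightarrow> nat) \<Rightarrow> nat list \<Rightarrow> nat list" where
  "remainders c x = map (\<lambda>k. x ! k mod c k) [0..<length x]"

definition quotients :: "(nat \<Rightarrow> nat) \<Rightarrow> nat list \<Rightarrow> nat list" where
  "quotients c x = map (\<lambda>k. x ! k div c k) [0..<length x]"

definition recombine :: "(nat \<Rightarrow> nat) \<Rightarrow> nat list \<Rightarrow> nat list \<Rightarrow> nat list" where
  "recombine c j q = map (\<lambda>k. j ! k + c k * q ! k) [0..<length j]"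

lemma recombine_remainders_quotients: "recombine c (remainders c x) (quotients c x) = x"
  by (auto simp: recombine_def remainders_def quotients_def intro!: nth_equalityI)

lemma
  assumes "length q = length j" and "\<forall>k<length j. j ! k < c k"
  shows remainders_recombine: "remainders c (recombine c j q) = j"
    and quotients_recombine: "quotients c (recombine c j q) = q"
  using assms by (auto simp: recombine_def remainders_def quotients_def intro!: nth_equalityI)

lemma weighted_sum_recombine:
  assumes "\<And>k. k < length a \<Longrightarrow> a ! k * c k = D"
    and "length j = length a" and "length q = length a"
  shows "(\<Sum>k<length a. a ! k * recombine c j q ! k) =
    (\<Sum>k<length a. a ! k * j ! k) + D * sum_list q"
proof -
  have "(\<Sum>k<length a. a ! k * recombine c j q ! k) =
      (\<Sum>k<length a. a ! k * j ! k + (a ! k * c k) * q ! k)"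
    using assms(2) by (intro sum.cong) (auto simp: recombine_def algebra_simps)
  also have "\<dots> = (\<Sum>k<length a. a ! k * j ! k + D * q ! k)"
    using assms(1) by (intro sum.cong) auto
  finally show ?thesis
    by (simp add: sum.distrib sum_distrib_left sum_list_eq_sum_nth[OF assms(3)])
qed

lemma remainders_quotients_mem:
  assumes cofactor: "\<And>k. k < length a \<Longrightarrow> a ! k * c k = D" and "D > 0"
    and x: "x \<in> solutions a n"
  defines "Q \<equiv> sum_list (quotients c x)"
  shows "Q \<le> n div D" and "remainders c x \<in> boxed_solutions a c (n - Q * D)"
    and "quotients c x \<in> compositions (length a) Q"
proof -
  have len: "length x = length a"
    using x by (simp add: solutions_def)
  have "n = (\<Sum>k<length a. a ! k * recombine c (remainders c x) (quotients c x) ! k)"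
    using x by (simp add: solutions_def recombine_remainders_quotients)
  also have "\<dots> = (\<Sum>k<length a. a ! k * remainders c x ! k) + D * Q"
    using cofactor len by (simp add: Q_def weighted_sum_recombine remainders_def quotients_def)
  finally have n: "n = (\<Sum>k<length a. a ! k * remainders c x ! k) + Q * D"
    by simp
  then show "Q \<le> n div D"
    using \<open>D > 0\<close> by (simp add: less_eq_div_iff_mult_less_eq)
  have "c k > 0" if "k < length a" for k
    using cofactor[OF that] \<open>D > 0\<close> by (cases "c k") auto
  with n len show "remainders c x \<in> boxed_solutions a c (n - Q * D)"
    by (simp add: boxed_solutions_def solutions_def remainders_def)
  show "quotients c x \<in> compositions (length a) Q"
    using len by (simp add: compositions_def Q_def quotients_def)
qed

lemma recombine_mem_solutions:
  assumes "\<And>k. k < length a \<Longrightarrow> a ! k * c k = D" and "D > 0" and "Q \<le> n div D"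
    and "j \<in> boxed_solutions a c (n - Q * D)" and "q \<in> compositions (length a) Q"
  shows "recombine c j q \<in> solutions a n"
proof -
  have "Q * D \<le> n" and j: "length j = length a" "(\<Sum>k<length a. a ! k * j ! k) = n - Q * D"
    and q: "length q = length a" "sum_list q = Q"
    using assms(2-) by (auto simp: boxed_solutions_def solutions_def compositions_def
        less_eq_div_iff_mult_less_eq)
  then have "(\<Sum>k<length a. a ! k * recombine c j q ! k) = n"
    using weighted_sum_recombine[OF assms(1) j(1) q(1)] by (simp add: mult.commute)
  then show ?thesis
    using j(1) by (simp add: solutions_def recombine_def)
qed

lemma bij_betw_solutions_Sigma:
  assumes "\<And>k. k < length a \<Longrightarrow> a ! k * c k = D" and "D > 0"
  shows "bij_betw (\<lambda>x. (sum_list (quotients c x), remainders c x, quotients c x)) (solutions a n)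
           (SIGMA Q:{..n div D}. boxed_solutions a c (n - Q * D) \<times> compositions (length a) Q)"
proof -
  let ?split = "\<lambda>x. (sum_list (quotients c x), remainders c x, quotients c x)"
  let ?join = "\<lambda>(Q :: nat, j, q). recombine c j q"
  let ?T = "SIGMA Q:{..n div D}. boxed_solutions a c (n - Q * D) \<times> compositions (length a) Q"
  show ?thesis
  proof (rule bij_betw_byWitness[where f' = ?join])
    show "\<forall>x\<in>solutions a n. ?join (?split x) = x"
      by (simp add: recombine_remainders_quotients)
    show "\<forall>t\<in>?T. ?split (?join t) = t"
      by (auto simp: boxed_solutions_def solutions_def compositions_def
          remainders_recombine quotients_recombine)
    show "?split ` solutions a n \<subseteq> ?T"
      using remainders_quotients_mem[OF assms] by auto
    show "?join ` ?T \<subseteq> solutions a n"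
      using recombine_mem_solutions[OF assms] by auto
  qed
qed

lemma card_solutions_eq_sum:
  assumes "\<And>k. k < length a \<Longrightarrow> a ! k * c k = D" and "D > 0"
  shows "card (solutions a n) =
    (\<Sum>Q\<le>n div D. ((Q + length a - 1) choose Q) * card (boxed_solutions a c (n - Q * D)))"
proof -
  have "card (solutions a n) =
      card (SIGMA Q:{..n div D}. boxed_solutions a c (n - Q * D) \<times> compositions (length a) Q)"
    using bij_betw_solutions_Sigma[OF assms] by (rule bij_betw_same_card)
  also have "\<dots> = (\<Sum>Q\<le>n div D. card (boxed_solutions a c (n - Q * D) \<times> compositions (length a) Q))"
    by (rule card_SigmaI) (auto intro: finite_boxed_solutions finite_compositions)
  finally show ?thesis
    by (simp add: card_cartesian_product card_compositions mult.commute)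
qed

lemma fact_mult_binomial_eq_prod: "fact m * ((Q + m) choose m) = (\<Prod>i=1..m. Q + i :: nat)"
proof (induction m)
  case (Suc m)
  have "fact (Suc m) * ((Q + Suc m) choose Suc m) = fact m * (Suc m * (Suc (Q + m) choose Suc m))"
    by (simp add: algebra_simps)
  also have "\<dots> = fact m * ((Q + m) choose m) * (Q + Suc m)"
    by (subst Suc_times_binomial) (simp add: algebra_simps)
  also have "\<dots> = (\<Prod>i=1..Suc m. Q + i)"
    using Suc by (simp add: prod.nat_ivl_Suc')
  finally show ?case .
qed simp

lemma fact_mult_p_a_eq_sum:
  assumes "length a \<ge> 1" and "\<forall>k<length a. a ! k dvd D" and "D > 0"
  shows "fact (length a - 1) * p_a a n =
    (\<Sum>Q\<le>n div D. (\<Prod>i=1..length a - 1. Q + i) * f_a a D (n - Q * D))"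
proof -
  have binomial: "(Q + length a - 1) choose Q = (Q + (length a - 1)) choose (length a - 1)" for Q
    using assms(1) binomial_symmetric[of Q "Q + (length a - 1)"] by simp
  have "a ! k * (D div a ! k) = D" if "k < length a" for k
    using assms(2) that by simp
  then have "p_a a n = (\<Sum>Q\<le>n div D. ((Q + length a - 1) choose Q) * f_a a D (n - Q * D))"
    unfolding p_a_eq_card_solutions f_a_eq_card_boxed_solutions
    using \<open>D > 0\<close> by (rule card_solutions_eq_sum)
  moreover have "fact (length a - 1) * ((Q + length a - 1) choose Q) = (\<Prod>i=1..length a - 1. Q + i)"
    for Q
    by (simp only: binomial fact_mult_binomial_eq_prod)
  ultimately show ?thesis
    by (simp add: sum_distrib_left flip: mult.assoc)
qed

lemma f_a_eq_0:
  assumes "\<forall>k<length a. a ! k dvd D" and "length a * D < m + sum_list a"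
  shows "f_a a D m = 0"
proof -
  have "boxed_solutions a (\<lambda>k. D div a ! k) m = {}"
  proof safe
    fix j assume j: "j \<in> boxed_solutions a (\<lambda>k. D div a ! k) m"
    have "a ! k * j ! k + a ! k \<le> D" if "k < length a" for k
    proof -
      have "a ! k * (j ! k + 1) \<le> a ! k * (D div a ! k)"
        using j that by (intro mult_le_mono2) (auto simp: boxed_solutions_def Suc_le_eq)
      with assms(1) that show ?thesis
        by simp
    qed
    then have "(\<Sum>k<length a. a ! k * j ! k + a ! k) \<le> (\<Sum>k<length a. D)"
      by (intro sum_mono) auto
    with j assms(2) show "j \<in> {}"
      by (simp add: boxed_solutions_def solutions_def sum.distrib
          sum_list_eq_sum_nth[OF refl, of a])
  qed
  then show ?thesis
    by (simp add: f_a_eq_card_boxed_solutions)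
qed

lemma less_ceiling_divide_imp:
  assumes "k < \<lceil>real m / real D\<rceil>" and "D > 0"
  shows "k * int D < int m"
proof -
  have "real_of_int k * real D < real m"
    using assms by (simp add: less_ceiling_iff pos_less_divide_eq)
  then show ?thesis
    by (metis of_int_less_iff of_int_mult of_int_of_nat_eq)
qed

lemma f_a_eq_0_below_lower_bound:
  assumes "\<forall>k<length a. a ! k dvd D" and "D > 0" and "Q * D \<le> n"
    and "int Q < \<lceil>(real n + real (sum_list a)) / real D\<rceil> - int (length a)"
  shows "f_a a D (n - Q * D) = 0"
proof (rule f_a_eq_0[OF assms(1)])
  have "(int Q + int (length a)) * int D < int (n + sum_list a)"
    using assms(2,4) by (intro less_ceiling_divide_imp) simp_all
  with assms(3) show "length a * D < n - Q * D + sum_list a"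
    by (simp add: algebra_simps flip: of_nat_mult of_nat_add)
qed

lemma prod_shift_eq_0:
  assumes "1 - int m \<le> j" and "j < 0"
  shows "(\<Prod>i=1..m - 1. j + int i) = 0"
proof -
  have "nat (- j) \<in> {1..m - 1}" "j + int (nat (- j)) = 0"
    using assms by auto
  then show ?thesis
    by (meson prod_zero finite_atLeastAtMost)
qed

lemma sum_int_interval_eq_sum_atMost:
  fixes g :: "int \<Rightarrow> 'a::comm_monoid_add"
  assumes "\<And>j. L \<le> j \<Longrightarrow> j < 0 \<Longrightarrow> g j = 0"
    and "\<And>Q. Q \<le> U \<Longrightarrow> int Q < L \<Longrightarrow> g (int Q) = 0"
  shows "(\<Sum>j\<in>{L..int U}. g j) = (\<Sum>Q\<le>U. g (int Q))"
proof -
  have range: "int ` {..U} = {0..int U}"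
    by (simp add: image_int_atLeastAtMost flip: atLeast0AtMost)
  have "(\<Sum>j\<in>{L..int U}. g j) = (\<Sum>j\<in>int ` {..U}. g j)"
    by (rule sum.mono_neutral_cong) (use assms range in force)+
  also have "\<dots> = (\<Sum>Q\<le>U. g (int Q))"
    by (simp add: sum.reindex)
  finally show ?thesis .
qed

theorem corollary2p3:
  fixes a :: "nat list" and D n :: nat
  assumes "length a \<ge> 1"
    and "\<forall>k<length a. a ! k > 0"
    and "D > 0"
    and "\<forall>k<length a. a ! k dvd D"
  shows "int (fact (length a - 1) * p_a a n) =
    (\<Sum>j\<in>{ \<lceil>(of_nat n + of_nat (sum_list a)) / (of_nat D :: real)\<rceil> - int (length a)
           .. int n div int D }.
       (\<Prod>i=1..length a - 1. j + int i) * int (f_a a D (nat (int n - j * int D))))"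
proof -
  let ?r = "length a"
  let ?L = "\<lceil>(real n + real (sum_list a)) / real D\<rceil> - int ?r"
  define g where "g j = (\<Prod>i=1..?r - 1. j + int i) * int (f_a a D (nat (int n - j * int D)))"
    for j
  have g_int: "g (int Q) = int ((\<Prod>i=1..?r - 1. Q + i) * f_a a D (n - Q * D))"
    if "Q * D \<le> n" for Q
  proof -
    have "nat (int n - int Q * int D) = n - Q * D"
      using that by (simp flip: of_nat_mult of_nat_diff)
    then show ?thesis
      by (simp add: g_def of_nat_prod)
  qed
  have "0 < a ! 0" "a ! 0 \<le> sum_list a"
    using assms(1,2) by (auto simp: Suc_le_eq intro: member_le_sum_list)
  then have L: "1 - int ?r \<le> ?L"
    using \<open>D > 0\<close> by simp
  have "(\<Sum>j\<in>{?L..int (n div D)}. g j) = (\<Sum>Q\<le>n div D. g (int Q))"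
  proof (rule sum_int_interval_eq_sum_atMost)
    show "g j = 0" if "?L \<le> j" "j < 0" for j
    proof -
      have "(\<Prod>i=1..?r - 1. j + int i) = 0"
        using that L by (intro prod_shift_eq_0) linarith+
      then show ?thesis
        by (simp add: g_def)
    qed
    show "g (int Q) = 0" if "Q \<le> n div D" "int Q < ?L" for Q
      using that assms(3,4) f_a_eq_0_below_lower_bound[of a D Q n]
      by (simp add: g_int less_eq_div_iff_mult_less_eq)
  qed
  also have "\<dots> = (\<Sum>Q\<le>n div D. int ((\<Prod>i=1..?r - 1. Q + i) * f_a a D (n - Q * D)))"
    using \<open>D > 0\<close> by (intro sum.cong) (simp_all add: g_int less_eq_div_iff_mult_less_eq)
  also have "\<dots> = int (fact (?r - 1) * p_a a n)"
    unfolding fact_mult_p_a_eq_sum[OF assms(1,4,3)] by (simp only: of_nat_sum)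
  finally show ?thesis
    by (simp add: g_def zdiv_int)
qed

end
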